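(* Consider the Diophantine equation $n^2-(12s-5)n+12s^2=0$ in positive integers $(n,s)$. The maps $\iota_1(n,s)=(n,n-s)$ and $\iota_2(n,s)=(12s-5-n,s)$ send positive integer solutions to positive integer solutions, and the set of all positive integer solutions is exactly the set of pairs obtained from $(3,1)$ by finitely many applications of $\iota_1$ and $\iota_2$. Explicitly, these are the pairs of the two-sided chain $\dots,(1444,1311),(1444,133),(147,133),(147,14),(16,14),(16,2),(3,2),(3,1),(4,1),(4,3),(27,3),(27,24),(256,24),(256,232),(2523,232),\dots$ in which consecutive pairs are related alternately by $\iota_1$ and $\iota_2$. *)

theory Defs
  imports Main
begin

definition sol :: "int \<times> int \<Rightarrow> bool" where
  "sol p = (case p of (n, s) \<Rightarrow> n > 0 \<and> s > 0 \<and> n^2 - (12*s - 5)*n + 12*s^2 = 0)"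

definition iota1 :: "int \<times> int \<Rightarrow> int \<times> int" where
  "iota1 p = (case p of (n, s) \<Rightarrow> (n, n - s))"

definition iota2 :: "int \<times> int \<Rightarrow> int \<times> int" where
  "iota2 p = (case p of (n, s) \<Rightarrow> (12*s - 5 - n, s))"

inductive_set generated :: "(int \<times> int) set" where
  base: "(3, 1) \<in> generated"
| step1: "p \<in> generated \<Longrightarrow> iota1 p \<in> generated"
| step2: "p \<in> generated \<Longrightarrow> iota2 p \<in> generated"

end

theory Submission
  imports Defs
begin

text \<open>Viewed as a quadratic in \<open>s\<close> the equation reads \<open>12 s (n - s) = n\<^sup>2 + 5 n\<close>, and as a
quadratic in \<open>n\<close> it reads \<open>n (12 s - 5 - n) = 12 s\<^sup>2\<close>; so \<open>\<iota>\<^sub>1\<close> and \<open>\<iota>\<^sub>2\<close> are the Vieta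
involutions exchanging the two roots, and both products being positive keeps the other root
positive. For a solution \<open>(n, t)\<close> with \<open>2 t < n\<close> and \<open>t \<ge> 2\<close> the partner root
\<open>m = 12 t - 5 - n\<close> is smaller than \<open>n\<close>: otherwise \<open>(n - 2t)(m - 2t) > 0\<close>, which expands to
\<open>10 t - 8 t\<^sup>2 > 0\<close>. Hence every solution descends, by at most one \<open>\<iota>\<^sub>1\<close> (to make \<open>2 s < n\<close>)
followed by one \<open>\<iota>\<^sub>2\<close>, to a solution with smaller \<open>n\<close>, until \<open>s = 1\<close>, where \<open>n \<in> {3, 4}\<close>.\<close>

lemma sol_Pair:
  "sol (n, s) \<longleftrightarrow> n > 0 \<and> s > 0 \<and> n\<^sup>2 - (12*s - 5)*n + 12*s\<^sup>2 = 0"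
  by (simp add: sol_def)

lemma sol_equation_in_s:
  fixes n s :: int
  shows "n\<^sup>2 - (12*s - 5)*n + 12*s\<^sup>2 = 0 \<longleftrightarrow> 12 * s * (n - s) = n\<^sup>2 + 5*n"
  by (auto simp: algebra_simps power2_eq_square)

lemma sol_equation_in_n:
  fixes n s :: int
  shows "n\<^sup>2 - (12*s - 5)*n + 12*s\<^sup>2 = 0 \<longleftrightarrow> n * (12*s - 5 - n) = 12 * s\<^sup>2"
  by (auto simp: algebra_simps power2_eq_square)

lemma sol_iota1:
  assumes "sol p"
  shows "sol (iota1 p)"
proof (cases p)
  case (Pair n s)
  with assms have pos: "n > 0" "s > 0" and eq: "12 * s * (n - s) = n\<^sup>2 + 5*n"
    by (auto simp: sol_Pair sol_equation_in_s)
  have "n\<^sup>2 + 5*n > 0"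
    using pos by (simp add: add_pos_pos)
  with eq pos have "n - s > 0"
    by (metis mult_pos_pos zero_less_mult_pos zero_less_numeral)
  moreover have "12 * (n - s) * (n - (n - s)) = n\<^sup>2 + 5*n"
    using eq by (simp add: algebra_simps)
  ultimately have "sol (n, n - s)"
    unfolding sol_Pair sol_equation_in_s using pos by blast
  then show ?thesis
    by (simp add: Pair iota1_def)
qed

lemma sol_iota2:
  assumes "sol p"
  shows "sol (iota2 p)"
proof (cases p)
  case (Pair n s)
  with assms have pos: "n > 0" "s > 0" and eq: "n * (12*s - 5 - n) = 12 * s\<^sup>2"
    by (auto simp: sol_Pair sol_equation_in_n)
  have "12 * s\<^sup>2 > 0"
    using pos by simp
  with eq pos have "12*s - 5 - n > 0"
    by (metis zero_less_mult_pos)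
  moreover have "(12*s - 5 - n) * (12*s - 5 - (12*s - 5 - n)) = 12 * s\<^sup>2"
    using eq by (simp add: algebra_simps)
  ultimately have "sol (12*s - 5 - n, s)"
    unfolding sol_Pair sol_equation_in_n using pos by blast
  then show ?thesis
    by (simp add: Pair iota2_def)
qed

lemma sol_double_neq:
  assumes "sol (n, s)"
  shows "2 * s \<noteq> n"
proof
  assume "2 * s = n"
  with assms have "s > 0" "12 * s * s = 4 * s\<^sup>2 + 10 * s"
    by (auto simp: sol_Pair sol_equation_in_s algebra_simps power2_eq_square)
  then have "8 * s = 10"
    by (simp add: algebra_simps power2_eq_square)
  then show False
    by presburger
qed

lemma sol_s_eq_1:
  assumes "sol (n, 1)"
  shows "n = 3 \<or> n = 4"
proof -
  from assms have "(n - 3) * (n - 4) = 0"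
    by (simp add: sol_Pair algebra_simps power2_eq_square)
  then show ?thesis
    by simp
qed

lemma sol_descent:
  assumes "sol (n, t)" and "2 * t < n" and "t \<ge> 2"
  shows "12*t - 5 - n < n"
proof (rule ccontr)
  assume "\<not> 12*t - 5 - n < n"
  with assms(2) have "(n - 2*t) * (12*t - 5 - n - 2*t) > 0"
    by simp
  moreover have "n * (12*t - 5 - n) = 12 * t\<^sup>2"
    using assms(1) by (simp add: sol_Pair sol_equation_in_n)
  ultimately have "10 * t - 8 * t * t > 0"
    by (simp add: algebra_simps power2_eq_square)
  moreover have "8 * t * t \<ge> 16 * t"
    using assms(3) by simp
  ultimately show False
    using assms(3) by linarith
qed

lemma generated_imp_sol: "p \<in> generated \<Longrightarrow> sol p"
  by (induction rule: generated.induct) (auto simp: sol_Pair sol_iota1 sol_iota2)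

lemma sol_imp_generated: "sol (n, s) \<Longrightarrow> (n, s) \<in> generated"
proof (induction "nat n" arbitrary: n s rule: less_induct)
  case less
  have small_s: "(n, t) \<in> generated" if sol_t: "sol (n, t)" and lt: "2 * t < n" for t
  proof (cases "t = 1")
    case True
    have "(4, 1) \<in> generated"
      using generated.step2[OF generated.base] by (simp add: iota2_def)
    with True sol_t sol_s_eq_1 show ?thesis
      using generated.base by blast
  next
    case False
    define m where "m = 12*t - 5 - n"
    from sol_t have "t > 0" "n > 0"
      by (auto simp: sol_Pair)
    with False have "m < n"
      using sol_descent[OF sol_t lt] by (simp add: m_def)
    moreover have sol_m: "sol (m, t)"
      using sol_iota2[OF sol_t] by (simp add: iota2_def m_def)
    moreover from sol_m have "m > 0"
      by (simp add: sol_Pair)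
    ultimately have "(m, t) \<in> generated"
      using less.hyps by simp
    then have "iota2 (m, t) \<in> generated"
      by (rule generated.step2)
    then show ?thesis
      by (simp add: iota2_def m_def)
  qed
  show ?case
  proof (cases "2 * s < n")
    case True
    then show ?thesis
      using small_s less.prems by blast
  next
    case False
    have sol_flip: "sol (n, n - s)"
      using sol_iota1[OF less.prems] by (simp add: iota1_def)
    have "2 * s \<noteq> n"
      using sol_double_neq less.prems by blast
    with False have "(n, n - s) \<in> generated"
      using small_s[OF sol_flip] by simp
    then have "iota1 (n, n - s) \<in> generated"
      by (rule generated.step1)
    then show ?thesis
      by (simp add: iota1_def)
  qed
qed

theorem mainTheorem11:
  shows "(\<forall>p. sol p \<longrightarrow> sol (iota1 p))
    \<and> (\<forall>p. sol p \<longrightarrow> sol (iota2 p))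
    \<and> {p. sol p} = generated
    \<and> (\<forall>p \<in> set [(1444,1311),(1444,133),(147,133),(147,14),(16,14),(16,2),(3,2),(3,1),
                 (4,1),(4,3),(27,3),(27,24),(256,24),(256,232),(2523,232)]. sol p)
    \<and> iota1 (1444,1311) = (1444,133) \<and> iota2 (1444,133) = (147,133)
    \<and> iota1 (147,133) = (147,14) \<and> iota2 (147,14) = (16,14)
    \<and> iota1 (16,14) = (16,2) \<and> iota2 (16,2) = (3,2)
    \<and> iota1 (3,2) = (3,1) \<and> iota2 (3,1) = (4,1)
    \<and> iota1 (4,1) = (4,3) \<and> iota2 (4,3) = (27,3)
    \<and> iota1 (27,3) = (27,24) \<and> iota2 (27,24) = (256,24)
    \<and> iota1 (256,24) = (256,232) \<and> iota2 (256,232) = (2523,232)"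
proof -
  have "{p. sol p} = generated"
    using generated_imp_sol sol_imp_generated by auto
  then show ?thesis
    using sol_iota1 sol_iota2 by (simp add: sol_Pair iota1_def iota2_def)
qed

end
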